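(* Let $\mathcal A$ be finite, and assume the margin condition with parameter $\nu\in(0,\infty]$ and the policy overlap condition with constant $\beta_0>0$. Let $\pi^\star(a\mid x)=\mathbf 1\{a=a^\star(x)\}$. Then: (i) if $\nu\in(0,\infty)$, for every policy $\pi$ satisfying overlap, \[ \operatorname{Var}_{X\sim P_X,A\sim\pi(\cdot\mid X)}\Big(\frac{\pi^\star(A\mid X)}{\pi(A\mid X)}\Big)\le\frac{K}{\beta_0}\big(R^\star(\pi)-R^\star(\pi^\star)\big)^{\nu/(\nu+1)},\qquad K=\Big(\frac{(\nu+1)^{(\nu+1)/\nu}\,c}{\nu M}\Big)^{\nu/(\nu+1)}; \] (ii) if $\nu=\infty$, the same variance is at most $\frac{1}{\beta_0Mu_0}\big(R^\star(\pi)-R^\star(\pi^\star)\big)$.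
   Context: Contexts $X\sim P_X$ on $\mathcal X$, finite action set $\mathcal A$, outcome (loss) $Y\sim P_Y(\cdot\mid X,A)$ with $\mu(x,a)=\mathbb E[Y\mid X=x,A=a]$. $\mu^\star(x)=\min_{a\in\mathcal A}\mu(x,a)$, attained at $a^\star(x)$, and $\Delta_{\min}(x)=\min_{a\ne a^\star(x)}\mu(x,a)-\mu^\star(x)\ge0$. For a policy $\pi$, $R^\star(\pi)=\mathbb E_{X\sim P_X,A\sim\pi(\cdot\mid X)}[\mu(X,A)]$. Margin condition (parameter $\nu$, constants $M,c>0$): for $\nu\in(0,\infty)$, $\Pr(\Delta_{\min}(X)\le Mu)\le(cu)^\nu$ for all $u\ge0$; for $\nu=\infty$, there is $u_0>0$ with $\Pr(\Delta_{\min}(X)\le Mu_0)=0$. Policy overlap: $\pi(a^\star(x)\mid x)\ge\beta_0$ for all $x\in\mathcal X$. *)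

theory Defs
  imports "HOL-Probability.Probability"
begin

text \<open>A policy is a conditional pmf given as a function
  pi x a. Expectations under X ~ P, A ~ pi(.|X) are written out explicitly, since the
  action set is finite: E f = integral over x of sum over a of pi x a * f x a.\<close>

definition joint_exp :: "'x measure \<Rightarrow> ('x \<Rightarrow> 'a::finite \<Rightarrow> real) \<Rightarrow> ('x \<Rightarrow> 'a \<Rightarrow> real) \<Rightarrow> real" where
  "joint_exp P pol f = (\<integral>x. (\<Sum>a\<in>UNIV. pol x a * f x a) \<partial>P)"

definition joint_var :: "'x measure \<Rightarrow> ('x \<Rightarrow> 'a::finite \<Rightarrow> real) \<Rightarrow> ('x \<Rightarrow> 'a \<Rightarrow> real) \<Rightarrow> real" where
  "joint_var P pol f = joint_exp P pol (\<lambda>x a. (f x a - joint_exp P pol f)\<^sup>2)"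

definition risk :: "'x measure \<Rightarrow> ('x \<Rightarrow> 'a::finite \<Rightarrow> real) \<Rightarrow> ('x \<Rightarrow> 'a \<Rightarrow> real) \<Rightarrow> real" where
  "risk P mu pol = joint_exp P pol mu"

definition is_policy :: "'x measure \<Rightarrow> ('x \<Rightarrow> 'a::finite \<Rightarrow> real) \<Rightarrow> bool" where
  "is_policy P pol \<longleftrightarrow> (\<forall>a. (\<lambda>x. pol x a) \<in> borel_measurable P) \<and>
     (\<forall>x\<in>space P. (\<forall>a. 0 \<le> pol x a) \<and> (\<Sum>a\<in>UNIV. pol x a) = 1)"

definition pi_star :: "('x \<Rightarrow> 'a) \<Rightarrow> 'x \<Rightarrow> 'a \<Rightarrow> real" where
  "pi_star astar x a = (if a = astar x then 1 else 0)"

text \<open>Minimal gap; infimum over the empty set (single action) is +infinity.\<close>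
definition Delta_min :: "('x \<Rightarrow> 'a \<Rightarrow> real) \<Rightarrow> ('x \<Rightarrow> 'a) \<Rightarrow> 'x \<Rightarrow> ereal" where
  "Delta_min mu astar x = (INF a\<in>{a. a \<noteq> astar x}. ereal (mu x a - mu x (astar x)))"

end

theory Submission
  imports Defs
begin

(* Write p(x) = pi(a*(x) | x). The importance weight pi*/pi has mean 1 and variance
   E[(1 - p)/p] <= E[1 - p] / beta0, so everything reduces to bounding the mass 1 - p that pi
   puts on suboptimal actions. Outside the event {Delta_min <= t} every suboptimal action costs
   more than t, hence E[1 - p] <= P(Delta_min <= t) + regret / t. With t = M u the margin
   condition turns this into (c u)^nu + regret / (M u); minimising over u gives (i), and for
   nu = infinity the choice u = u0 kills the first term. *)

lemma sum_importance_weight: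
  fixes p :: "'a::finite \<Rightarrow> real"
  assumes "p b > 0"
  shows "(\<Sum>a\<in>UNIV. p a * ((if a = b then 1 else 0) / p a)) = 1"
  using assms by (subst sum.remove[of _ b]) (auto intro!: sum.neutral)

lemma sum_importance_weight_sq:
  fixes p :: "'a::finite \<Rightarrow> real"
  assumes pos: "p b > 0" and sum_one: "(\<Sum>a\<in>UNIV. p a) = 1"
  shows "(\<Sum>a\<in>UNIV. p a * ((if a = b then 1 else 0) / p a - 1)\<^sup>2) = (1 - p b) / p b"
proof -
  have "(\<Sum>a\<in>UNIV. p a * ((if a = b then 1 else 0) / p a - 1)\<^sup>2)
      = p b * (1 / p b - 1)\<^sup>2 + (\<Sum>a\<in>UNIV - {b}. p a)"
    by (simp add: sum.remove[of UNIV b])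
  also have "\<dots> = p b * (1 / p b - 1)\<^sup>2 + (1 - p b)"
    using sum_one by (simp add: sum_diff1)
  also have "\<dots> = (1 - p b) / p b"
    using pos by (simp add: field_simps power2_eq_square)
  finally show ?thesis .
qed

lemma gap_mass_le_weighted_gap:
  fixes p g :: "'a::finite \<Rightarrow> real"
  assumes nonneg: "\<And>a. 0 \<le> p a" and sum_one: "(\<Sum>a\<in>UNIV. p a) = 1"
    and gap: "\<And>a. a \<noteq> b \<Longrightarrow> t \<le> g a - g b"
  shows "t * (1 - p b) \<le> (\<Sum>a\<in>UNIV. p a * (g a - g b))"
proof -
  have "t * (1 - p b) = (\<Sum>a\<in>UNIV - {b}. p a * t)"
    using sum_one by (simp add: sum_diff1 sum_distrib_right[symmetric])
  also have "\<dots> \<le> (\<Sum>a\<in>UNIV - {b}. p a * (g a - g b))"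
    using gap by (intro sum_mono mult_left_mono) (auto simp: nonneg)
  also have "\<dots> = (\<Sum>a\<in>UNIV. p a * (g a - g b))"
    by (subst (2) sum.remove[of _ b]) auto
  finally show ?thesis .
qed

lemma Delta_min_le_ereal_iff:
  fixes mu :: "'x \<Rightarrow> 'a::finite \<Rightarrow> real"
  shows "Delta_min mu astar x \<le> ereal t \<longleftrightarrow> (\<exists>a. a \<noteq> astar x \<and> mu x a - mu x (astar x) \<le> t)"
proof (cases "{a. a \<noteq> astar x} = {}")
  case True
  then show ?thesis by (auto simp: Delta_min_def top_ereal_def)
next
  case False
  have "Delta_min mu astar x = Min ((\<lambda>a. ereal (mu x a - mu x (astar x))) ` {a. a \<noteq> astar x})"
    unfolding Delta_min_def using False by (intro Min_Inf[symmetric]) auto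
  then show ?thesis
    using False by (simp add: Min_le_iff)
qed

lemma margin_tradeoff_at_optimum:
  fixes nu c M R :: real
  assumes nu: "nu > 0" and c: "c > 0" and M: "M > 0" and R: "R > 0"
  defines "z \<equiv> c * R / (nu * M)"
  defines "u \<equiv> z powr (1 / (nu + 1)) / c"
  shows "(c * u) powr nu + R / (M * u) = (nu + 1) * z powr (nu / (nu + 1))"
proof -
  \<comment> \<open>u balances the two terms: R / (M u) = nu (c u) powr nu.\<close>
  define w where "w = z powr (1 / (nu + 1))"
  have z: "z > 0" using c R nu M by (simp add: z_def)
  then have w: "w > 0" by (simp add: w_def)
  have cu: "c * u = w" using c by (simp add: u_def w_def)
  have w_nu: "w powr nu = z powr (nu / (nu + 1))"
    unfolding w_def by (simp add: powr_powr)
  have "w powr nu * w = w powr (nu + 1)" using w by (simp add: powr_add)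
  also have "\<dots> = z" unfolding w_def using z nu by (simp add: powr_powr)
  finally have w_z: "w powr nu * w = z" .
  have "u > 0"
    using z c by (simp add: u_def)
  then have "R / (M * u) = nu * z / (c * u)"
    using c M nu by (simp add: z_def field_simps)
  also have "\<dots> = nu * z / w"
    by (simp add: cu)
  also have "\<dots> = nu * w powr nu"
    using w_z w by (simp add: field_simps)
  finally show ?thesis
    using cu w_nu by (simp add: algebra_simps)
qed

lemma margin_constant_powr:
  fixes nu c M R :: real
  assumes nu: "nu > 0" and c: "c > 0" and M: "M > 0" and R: "R \<ge> 0"
  shows "(((nu + 1) powr ((nu + 1) / nu) * c) / (nu * M)) powr (nu / (nu + 1)) * R powr (nu / (nu + 1))
    = (nu + 1) * (c * R / (nu * M)) powr (nu / (nu + 1))"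
proof -
  let ?e = "nu / (nu + 1)" and ?k = "(nu + 1) powr ((nu + 1) / nu)"
  have "(?k * c / (nu * M)) powr ?e * R powr ?e = (?k * (c * R / (nu * M))) powr ?e"
    using nu c M R by (simp add: powr_mult[symmetric] mult.assoc)
  also have "\<dots> = ?k powr ?e * (c * R / (nu * M)) powr ?e"
    by (intro powr_mult; use nu c M R in simp)
  also have "?k powr ?e = nu + 1"
    using nu by (simp add: powr_powr)
  finally show ?thesis by simp
qed

lemma margin_tradeoff_bound:
  fixes nu c M R I :: real
  assumes nu: "nu > 0" and c: "c > 0" and M: "M > 0" and R: "R \<ge> 0"
    and tradeoff: "\<And>u. u > 0 \<Longrightarrow> I \<le> (c * u) powr nu + R / (M * u)"
  shows "I \<le> (((nu + 1) powr ((nu + 1) / nu) * c) / (nu * M)) powr (nu / (nu + 1)) * R powr (nu / (nu + 1))"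
proof (cases "R = 0")
  case True
  have "I \<le> 0"
  proof (rule ccontr)
    assume "\<not> I \<le> 0"
    then have I: "I > 0" by simp
    define u where "u = (I / 2) powr (1 / nu) / c"
    have "u > 0" using I c by (simp add: u_def)
    moreover have "(c * u) powr nu = I / 2"
      using I c nu by (simp add: u_def powr_powr)
    ultimately show False using tradeoff True I by fastforce
  qed
  then show ?thesis using True by simp
next
  case False
  with R have "R > 0" by simp
  define u where "u = (c * R / (nu * M)) powr (1 / (nu + 1)) / c"
  have "u > 0"
    using nu c M \<open>R > 0\<close> by (simp add: u_def)
  then have "I \<le> (c * u) powr nu + R / (M * u)"
    by (rule tradeoff)
  also have "\<dots> = (nu + 1) * (c * R / (nu * M)) powr (nu / (nu + 1))"
    unfolding u_def using nu c M \<open>R > 0\<close> by (rule margin_tradeoff_at_optimum)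
  finally show ?thesis
    using nu c M R by (simp add: margin_constant_powr)
qed

lemma
  assumes "is_policy P pol"
  shows is_policy_measurable: "(\<lambda>x. pol x a) \<in> borel_measurable P"
    and is_policy_nonneg: "x \<in> space P \<Longrightarrow> 0 \<le> pol x a"
    and is_policy_sum: "x \<in> space P \<Longrightarrow> (\<Sum>a\<in>UNIV. pol x a) = 1"
  using assms unfolding is_policy_def by auto

lemma is_policy_le_1:
  assumes "is_policy P pol" and "x \<in> space P"
  shows "pol x a \<le> 1"
proof -
  have "pol x a \<le> (\<Sum>a\<in>UNIV. pol x a)"
    using assms by (intro member_le_sum) (auto simp: is_policy_nonneg)
  then show ?thesis
    using assms by (simp add: is_policy_sum)
qed

locale contextual_bandit = prob_space P for P :: "'x measure" +
  fixes mu :: "'x \<Rightarrow> 'a::finite \<Rightarrow> real" and astar :: "'x \<Rightarrow> 'a"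
  assumes integrable_mu: "\<And>a. integrable P (\<lambda>x. mu x a)"
    and sets_astar_eq: "\<And>a. {x\<in>space P. astar x = a} \<in> sets P"
    and mu_astar_le: "\<And>x a. x \<in> space P \<Longrightarrow> mu x (astar x) \<le> mu x a"
begin

abbreviation regret :: "('x \<Rightarrow> 'a \<Rightarrow> real) \<Rightarrow> real" where
  "regret pol \<equiv> risk P mu pol - risk P mu (pi_star astar)"

lemma measurable_astar: "astar \<in> measurable P (count_space UNIV)"
proof (subst measurable_count_space_eq2_countable, safe)
  fix a
  have "astar -` {a} \<inter> space P = {x\<in>space P. astar x = a}" by auto
  then show "astar -` {a} \<inter> space P \<in> sets P"
    using sets_astar_eq by simp
qed auto

(* Apply with rule, never intro: the conclusion unifies with every function of x, so intro loops. *)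
lemma borel_measurable_at_astar:
  assumes "\<And>a. (\<lambda>x. f x a) \<in> borel_measurable P"
  shows "(\<lambda>x. f x (astar x)) \<in> borel_measurable P"
  using measurable_compose_countable'[where f="\<lambda>a x. f x a" and I=UNIV, OF assms measurable_astar]
  by simp

lemma is_policy_pi_star: "is_policy P (pi_star astar)"
proof -
  have "(\<lambda>x. pi_star astar x a) \<in> borel_measurable P" for a
    unfolding pi_star_def by (rule borel_measurable_at_astar) simp
  then show ?thesis
    unfolding is_policy_def by (auto simp: pi_star_def)
qed

lemma integrable_policy_mu:
  assumes pol: "is_policy P pol"
  shows "integrable P (\<lambda>x. \<Sum>a\<in>UNIV. pol x a * mu x a)"
proof (intro Bochner_Integration.integrable_sum Bochner_Integration.integrable_bound[OF integrable_mu])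
  fix a
  show "(\<lambda>x. pol x a * mu x a) \<in> borel_measurable P"
    using is_policy_measurable[OF pol] borel_measurable_integrable[OF integrable_mu]
    by (rule borel_measurable_times)
  show "AE x in P. norm (pol x a * mu x a) \<le> norm (mu x a)"
    using pol by (intro AE_I2)
      (auto simp: abs_mult is_policy_nonneg is_policy_le_1 intro!: mult_left_le_one_le)
qed

lemma weighted_gap_eq:
  assumes "is_policy P pol" and "x \<in> space P"
  shows "(\<Sum>a\<in>UNIV. pol x a * (mu x a - mu x (astar x)))
    = (\<Sum>a\<in>UNIV. pol x a * mu x a) - (\<Sum>a\<in>UNIV. pi_star astar x a * mu x a)"
proof -
  have "(\<Sum>a\<in>UNIV. pi_star astar x a * mu x a) = mu x (astar x)"
    by (simp add: pi_star_def if_distrib[of "\<lambda>z. z * _"] cong: if_cong)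
  then show ?thesis
    using assms by (simp add: algebra_simps sum_subtractf sum_distrib_right[symmetric] is_policy_sum)
qed

lemma
  assumes pol: "is_policy P pol"
  shows integrable_weighted_gap: "integrable P (\<lambda>x. \<Sum>a\<in>UNIV. pol x a * (mu x a - mu x (astar x)))"
    and regret_eq_integral: "regret pol = (\<integral>x. (\<Sum>a\<in>UNIV. pol x a * (mu x a - mu x (astar x))) \<partial>P)"
proof -
  note integrands = integrable_policy_mu[OF pol] integrable_policy_mu[OF is_policy_pi_star]
  show "integrable P (\<lambda>x. \<Sum>a\<in>UNIV. pol x a * (mu x a - mu x (astar x)))"
    using Bochner_Integration.integrable_diff[OF integrands]
    by (rule Bochner_Integration.integrable_cong[OF refl, THEN iffD1, rotated]) (simp add: weighted_gap_eq pol)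
  show "regret pol = (\<integral>x. (\<Sum>a\<in>UNIV. pol x a * (mu x a - mu x (astar x))) \<partial>P)"
    unfolding risk_def joint_exp_def Bochner_Integration.integral_diff[OF integrands, symmetric]
    by (intro Bochner_Integration.integral_cong) (simp_all add: weighted_gap_eq pol)
qed

lemma regret_nonneg:
  assumes pol: "is_policy P pol"
  shows "0 \<le> regret pol"
proof -
  have "0 \<le> (\<integral>x. (\<Sum>a\<in>UNIV. pol x a * (mu x a - mu x (astar x))) \<partial>P)"
    by (intro Bochner_Integration.integral_nonneg sum_nonneg mult_nonneg_nonneg)
      (simp_all add: is_policy_nonneg[OF pol] mu_astar_le)
  then show ?thesis
    by (simp add: regret_eq_integral[OF pol])
qed

lemma sets_Delta_min_le: "{x\<in>space P. Delta_min mu astar x \<le> ereal t} \<in> sets P"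
proof -
  have "(\<lambda>x. mu x (astar x)) \<in> borel_measurable P"
    by (rule borel_measurable_at_astar) (use integrable_mu in blast)
  then have "(\<lambda>x. mu x a - mu x (astar x)) \<in> borel_measurable P" for a
    using integrable_mu[of a] by (intro borel_measurable_diff) blast+
  then have "{x\<in>space P. mu x a - mu x (astar x) \<le> t} - {x\<in>space P. astar x = a} \<in> sets P" for a
    using sets_astar_eq[of a] by (intro sets.Diff) (simp_all add: borel_measurable_iff_le)
  moreover have "{x\<in>space P. mu x a - mu x (astar x) \<le> t} - {x\<in>space P. astar x = a}
      = {x\<in>space P. a \<noteq> astar x \<and> mu x a - mu x (astar x) \<le> t}" for a
    by auto
  ultimately have "(\<Union>a. {x\<in>space P. a \<noteq> astar x \<and> mu x a - mu x (astar x) \<le> t}) \<in> sets P"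
    by (intro sets.countable_UN) auto
  also have "(\<Union>a. {x\<in>space P. a \<noteq> astar x \<and> mu x a - mu x (astar x) \<le> t})
      = {x\<in>space P. Delta_min mu astar x \<le> ereal t}"
    by (rule set_eqI) (simp add: Delta_min_le_ereal_iff)
  finally show ?thesis .
qed

lemma integrable_policy_at_astar:
  assumes pol: "is_policy P pol"
  shows "integrable P (\<lambda>x. pol x (astar x))"
proof (rule integrable_const_bound[where B=1])
  show "AE x in P. norm (pol x (astar x)) \<le> 1"
    using pol by (intro AE_I2) (simp add: is_policy_nonneg is_policy_le_1)
  show "(\<lambda>x. pol x (astar x)) \<in> borel_measurable P"
    using is_policy_measurable[OF pol] by (rule borel_measurable_at_astar)
qed

lemma suboptimal_mass_le_margin_plus_regret:
  assumes pol: "is_policy P pol" and t: "t > 0"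
  shows "(\<integral>x. 1 - pol x (astar x) \<partial>P)
    \<le> measure P {x\<in>space P. Delta_min mu astar x \<le> ereal t} + regret pol / t"
proof -
  let ?S = "{x\<in>space P. Delta_min mu astar x \<le> ereal t}"
  let ?D = "\<lambda>x. \<Sum>a\<in>UNIV. pol x a * (mu x a - mu x (astar x))"
  have integrable_bound: "integrable P (\<lambda>x. indicator ?S x + ?D x / t)"
    using integrable_weighted_gap[OF pol] sets_Delta_min_le
    by (intro Bochner_Integration.integrable_add integrable_real_indicator
        Bochner_Integration.integrable_divide_zero) (auto simp: less_top[symmetric])
  have "1 - pol x (astar x) \<le> indicator ?S x + ?D x / t" if x: "x \<in> space P" for x
  proof (cases "x \<in> ?S")
    case True
    have "0 \<le> ?D x"
      using x by (intro sum_nonneg mult_nonneg_nonneg) (simp_all add: is_policy_nonneg[OF pol] mu_astar_le)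
    with t have "0 \<le> ?D x / t"
      by simp
    then show ?thesis
      using True t is_policy_nonneg[OF pol x, of "astar x"] by simp
  next
    case False
    then have "t \<le> mu x a - mu x (astar x)" if "a \<noteq> astar x" for a
      using x that by (auto simp: Delta_min_le_ereal_iff)
    then have "t * (1 - pol x (astar x)) \<le> ?D x"
      using x by (intro gap_mass_le_weighted_gap) (simp_all add: is_policy_nonneg[OF pol] is_policy_sum[OF pol])
    then show ?thesis
      using False t by (simp add: field_simps)
  qed
  then have "(\<integral>x. 1 - pol x (astar x) \<partial>P) \<le> (\<integral>x. indicator ?S x + ?D x / t \<partial>P)"
    using integrable_policy_at_astar[OF pol] integrable_bound
    by (intro Bochner_Integration.integral_mono) auto
  also have "\<dots> = measure P ?S + regret pol / t"
    using integrable_weighted_gap[OF pol] sets_Delta_min_le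
    by (subst Bochner_Integration.integral_add)
      (auto simp: regret_eq_integral[OF pol] less_top[symmetric]
        intro!: integrable_real_indicator Bochner_Integration.integrable_divide_zero)
  finally show ?thesis .
qed

lemma joint_var_importance_weight_eq:
  assumes pol: "is_policy P pol" and pos: "\<And>x. x \<in> space P \<Longrightarrow> pol x (astar x) > 0"
  shows "joint_var P pol (\<lambda>x a. pi_star astar x a / pol x a)
    = (\<integral>x. (1 - pol x (astar x)) / pol x (astar x) \<partial>P)"
proof -
  have "joint_exp P pol (\<lambda>x a. pi_star astar x a / pol x a) = (\<integral>x. 1 \<partial>P)"
    unfolding joint_exp_def pi_star_def
    by (intro Bochner_Integration.integral_cong refl sum_importance_weight) (simp add: pos)
  then have mean: "joint_exp P pol (\<lambda>x a. pi_star astar x a / pol x a) = 1"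
    by (simp add: prob_space)
  show ?thesis
    unfolding joint_var_def mean unfolding joint_exp_def pi_star_def
    by (intro Bochner_Integration.integral_cong) (simp_all add: sum_importance_weight_sq pos is_policy_sum[OF pol])
qed

lemma joint_var_importance_weight_le:
  assumes pol: "is_policy P pol" and beta0: "beta0 > 0"
    and overlap: "\<forall>x\<in>space P. beta0 \<le> pol x (astar x)"
  shows "joint_var P pol (\<lambda>x a. pi_star astar x a / pol x a)
    \<le> (\<integral>x. 1 - pol x (astar x) \<partial>P) / beta0"
proof -
  have bound: "0 \<le> 1 - pol x (astar x)" "1 - pol x (astar x) \<le> 1" "beta0 \<le> pol x (astar x)"
    if "x \<in> space P" for x
    using that overlap is_policy_le_1[OF pol] is_policy_nonneg[OF pol] by auto
  have "(1 - pol x (astar x)) / pol x (astar x) \<le> (1 - pol x (astar x)) / beta0"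
    if "x \<in> space P" for x
    using bound[OF that] beta0 by (intro divide_left_mono) auto
  moreover have "integrable P (\<lambda>x. (1 - pol x (astar x)) / pol x (astar x))"
  proof (rule integrable_const_bound[where B="1 / beta0"])
    have "(1 - pol x (astar x)) / pol x (astar x) \<le> 1 / beta0" if "x \<in> space P" for x
    proof -
      have "(1 - pol x (astar x)) / pol x (astar x) \<le> 1 / pol x (astar x)"
        using bound[OF that] beta0 by (intro divide_right_mono) auto
      also have "\<dots> \<le> 1 / beta0"
        using bound[OF that] beta0 by (intro divide_left_mono) auto
      finally show ?thesis .
    qed
    then show "AE x in P. norm ((1 - pol x (astar x)) / pol x (astar x)) \<le> 1 / beta0"
      using bound beta0 by (intro AE_I2) auto
    show "(\<lambda>x. (1 - pol x (astar x)) / pol x (astar x)) \<in> borel_measurable P"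
      using borel_measurable_at_astar[OF is_policy_measurable[OF pol]]
      by (intro borel_measurable_divide borel_measurable_diff borel_measurable_const)
  qed
  ultimately have "(\<integral>x. (1 - pol x (astar x)) / pol x (astar x) \<partial>P)
      \<le> (\<integral>x. (1 - pol x (astar x)) / beta0 \<partial>P)"
    using integrable_policy_at_astar[OF pol]
    by (intro Bochner_Integration.integral_mono) auto
  moreover have "pol x (astar x) > 0" if "x \<in> space P" for x
    using bound(3)[OF that] beta0 by linarith
  ultimately show ?thesis
    by (simp add: joint_var_importance_weight_eq[OF pol])
qed

lemma joint_var_importance_weight_le_margin:
  assumes nu: "nu > 0" and c: "c > 0" and M: "M > 0" and beta0: "beta0 > 0"
    and margin: "\<forall>u\<ge>0. measure P {x\<in>space P. Delta_min mu astar x \<le> ereal (M * u)} \<le> (c * u) powr nu"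
    and pol: "is_policy P pol" and overlap: "\<forall>x\<in>space P. beta0 \<le> pol x (astar x)"
  shows "joint_var P pol (\<lambda>x a. pi_star astar x a / pol x a)
    \<le> ((((nu + 1) powr ((nu + 1) / nu) * c) / (nu * M)) powr (nu / (nu + 1)) / beta0)
      * regret pol powr (nu / (nu + 1))"
proof -
  have "joint_var P pol (\<lambda>x a. pi_star astar x a / pol x a) \<le> (\<integral>x. 1 - pol x (astar x) \<partial>P) / beta0"
    using pol beta0 overlap by (rule joint_var_importance_weight_le)
  also have "(\<integral>x. 1 - pol x (astar x) \<partial>P)
      \<le> (((nu + 1) powr ((nu + 1) / nu) * c) / (nu * M)) powr (nu / (nu + 1)) * regret pol powr (nu / (nu + 1))"
  proof (rule margin_tradeoff_bound[OF nu c M regret_nonneg[OF pol]])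
    fix u :: real
    assume u: "u > 0"
    have "(\<integral>x. 1 - pol x (astar x) \<partial>P)
        \<le> measure P {x\<in>space P. Delta_min mu astar x \<le> ereal (M * u)} + regret pol / (M * u)"
      using M u by (intro suboptimal_mass_le_margin_plus_regret pol) simp
    also have "\<dots> \<le> (c * u) powr nu + regret pol / (M * u)"
      using margin u by simp
    finally show "(\<integral>x. 1 - pol x (astar x) \<partial>P) \<le> (c * u) powr nu + regret pol / (M * u)" .
  qed
  finally show ?thesis
    using beta0 by (simp add: divide_right_mono)
qed

lemma joint_var_importance_weight_le_hard_margin:
  assumes M: "M > 0" and u0: "u0 > 0" and beta0: "beta0 > 0"
    and margin: "measure P {x\<in>space P. Delta_min mu astar x \<le> ereal (M * u0)} = 0"
    and pol: "is_policy P pol" and overlap: "\<forall>x\<in>space P. beta0 \<le> pol x (astar x)"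
  shows "joint_var P pol (\<lambda>x a. pi_star astar x a / pol x a) \<le> (1 / (beta0 * M * u0)) * regret pol"
proof -
  have "joint_var P pol (\<lambda>x a. pi_star astar x a / pol x a) \<le> (\<integral>x. 1 - pol x (astar x) \<partial>P) / beta0"
    using pol beta0 overlap by (rule joint_var_importance_weight_le)
  also have "\<dots> \<le> regret pol / (M * u0) / beta0"
    using suboptimal_mass_le_margin_plus_regret[OF pol, of "M * u0"] margin M u0 beta0
    by (intro divide_right_mono) simp_all
  finally show ?thesis
    by (simp add: mult_ac)
qed

end

theorem mainTheorem6:
  fixes P :: "'x measure" and mu :: "'x \<Rightarrow> 'a::finite \<Rightarrow> real"
    and astar :: "'x \<Rightarrow> 'a" and M beta0 :: real
  assumes "prob_space P"
    and "\<And>a. integrable P (\<lambda>x. mu x a)"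
    and "\<And>a. {x\<in>space P. astar x = a} \<in> sets P"
    and "\<And>x a. x \<in> space P \<Longrightarrow> mu x (astar x) \<le> mu x a"
    and "M > 0" and "beta0 > 0"
  shows
    "(\<forall>(nu::real) (c::real). nu > 0 \<longrightarrow> c > 0 \<longrightarrow>
        (\<forall>u\<ge>0. measure P {x\<in>space P. Delta_min mu astar x \<le> ereal (M * u)} \<le> (c * u) powr nu) \<longrightarrow>
        (\<forall>pol. is_policy P pol \<longrightarrow> (\<forall>x\<in>space P. pol x (astar x) \<ge> beta0) \<longrightarrow>
           joint_var P pol (\<lambda>x a. pi_star astar x a / pol x a)
             \<le> ((((nu + 1) powr ((nu + 1) / nu) * c) / (nu * M)) powr (nu / (nu + 1)) / beta0)
                * (risk P mu pol - risk P mu (pi_star astar)) powr (nu / (nu + 1))))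
     \<and>
     (\<forall>u0::real. u0 > 0 \<longrightarrow>
        measure P {x\<in>space P. Delta_min mu astar x \<le> ereal (M * u0)} = 0 \<longrightarrow>
        (\<forall>pol. is_policy P pol \<longrightarrow> (\<forall>x\<in>space P. pol x (astar x) \<ge> beta0) \<longrightarrow>
           joint_var P pol (\<lambda>x a. pi_star astar x a / pol x a)
             \<le> (1 / (beta0 * M * u0)) * (risk P mu pol - risk P mu (pi_star astar))))"
proof -
  interpret contextual_bandit P mu astar
    using assms(1-4) by (simp add: contextual_bandit_def contextual_bandit_axioms_def)
  show ?thesis
    using joint_var_importance_weight_le_margin joint_var_importance_weight_le_hard_margin
      \<open>M > 0\<close> \<open>beta0 > 0\<close>
    by blast
qed

end
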